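(* In the setup below (arbitrary gauge), assume $p(\omega|x)>0$ for all $\omega\in\checkmark$ and that $\langle F_{\omega,x}\rangle=\langle F_{\Omega,x}\rangle\langle E_{\omega,x}\rangle$ for all $\omega\in\checkmark$. Then $$\sum_{\omega\in\checkmark}p(\omega|x)I(\sigma_{x|\omega})=4\big(\langle G_{\checkmark,x}\rangle-\langle F_{\Omega,x}\rangle\langle F_{\checkmark,x}\rangle\big),$$ and, whenever $I^Q>0$, the relative loss $\kappa:=1-\sum_{\omega\in\checkmark}p(\omega|x)I(\sigma_{x|\omega})/I^Q$ equals $$\kappa=\frac{\langle G_{\times,x}\rangle-\langle F_{\Omega,x}\rangle\langle F_{\times,x}\rangle}{\langle G_{\Omega,x}\rangle-\langle F_{\Omega,x}\rangle^2}.$$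
   Context: Setup: finite-dimensional $\mathcal H_S,\mathcal H_E$; unit vectors $|\psi_i\rangle\in\mathcal H_S$, $|\phi_i^E\rangle\in\mathcal H_E$; a $C^1$ family of unitaries $U_x^{SE}$ on $\mathcal H_S\otimes\mathcal H_E$; an orthonormal basis $\{|\pi_\omega^E\rangle\}_{\omega\in\Omega}$ of $\mathcal H_E$, $\Omega=\checkmark\sqcup\times$. $|\Psi_x^{SE}\rangle=U_x^{SE}(|\psi_i\rangle\otimes|\phi_i^E\rangle)$, $M_{\omega,x}=\langle\pi_\omega^E|U_x^{SE}|\phi_i^E\rangle$, $|\tilde\psi_{x|\omega}\rangle=M_{\omega,x}|\psi_i\rangle$, $p(\omega|x)=\|\tilde\psi_{x|\omega}\|^2$, $\sigma_{x|\omega}=|\tilde\psi_{x|\omega}\rangle\langle\tilde\psi_{x|\omega}|/p(\omega|x)$. QFI of a normalized pure state: $I(|\phi_x\rangle)=4(\langle\partial_x\phi_x|\partial_x\phi_x\rangle-|\langle\phi_x|\partial_x\phi_x\rangle|^2)$; $I^Q=I(|\Psi_x^{SE}\rangle)$. Define $E_{\omega,x}=M_{\omega,x}^\dagger M_{\omega,x}$, $F_{\omega,x}=i\,\partial_xM_{\omega,x}^\dagger M_{\omega,x}$, $G_{\omega,x}=\partial_xM_{\omega,x}^\dagger\partial_xM_{\omega,x}$, and for $S\subseteq\Omega$, $X_{S,x}=\sum_{\omega\in S}X_{\omega,x}$. $\langle A\rangle=\langle\psi_i|A|\psi_i\rangle$. *)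

theory Defs
  imports "HOL-Analysis.Analysis"
begin

text \<open>Finite-dimensional Hilbert spaces are modelled as complex^'n for finite index types;
  H_S = complex^'s, H_E = complex^'e, H_S (x) H_E = complex^('s \<times> 'e).
  Operators are matrices complex^'n^'m acting by *v.\<close>

definition cinner :: "complex^'n \<Rightarrow> complex^'n \<Rightarrow> complex" where
  "cinner u v = (\<Sum>i\<in>UNIV. cnj (u$i) * v$i)"

definition cadj :: "complex^'n^'m \<Rightarrow> complex^'m^'n" where
  "cadj A = (\<chi> i j. cnj (A$j$i))"

definition unitary_mat :: "complex^'n^'n \<Rightarrow> bool" where
  "unitary_mat A \<longleftrightarrow> cadj A ** A = mat 1 \<and> A ** cadj A = mat 1"

definition orthonormal_basis :: "('w \<Rightarrow> complex^'e) \<Rightarrow> bool" where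
  "orthonormal_basis b \<longleftrightarrow>
     (\<forall>a c. cinner (b a) (b c) = (if a = c then 1 else 0)) \<and>
     (\<forall>v. \<exists>k. v = (\<Sum>w\<in>UNIV. k w *s b w))"

definition tensor_vec :: "complex^'s \<Rightarrow> complex^'e \<Rightarrow> complex^('s \<times> 'e)" where
  "tensor_vec u v = (\<chi> ij. u$(fst ij) * v$(snd ij))"

text \<open>QFI of a (normalized) pure-state family: I = 4(<d phi|d phi> - |<phi|d phi>|^2).\<close>
definition pure_qfi :: "(real \<Rightarrow> complex^'n) \<Rightarrow> real \<Rightarrow> real" where
  "pure_qfi \<phi> x =
     (let d = vector_derivative \<phi> (at x) in 4 * ((norm d)^2 - (cmod (cinner (\<phi> x) d))^2))"

text \<open>M_{w,x} = <pi_w| U_x |phi_i^E>, an operator on H_S.\<close>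
definition kraus :: "(real \<Rightarrow> complex^('s \<times> 'e)^('s \<times> 'e)) \<Rightarrow> ('w \<Rightarrow> complex^'e) \<Rightarrow> complex^'e
     \<Rightarrow> 'w \<Rightarrow> real \<Rightarrow> complex^'s^'s" where
  "kraus U \<pi> \<phi>E w t =
     (\<chi> s s'. \<Sum>e\<in>UNIV. \<Sum>e'\<in>UNIV. cnj (\<pi> w $ e) * U t $ (s, e) $ (s', e') * \<phi>E $ e')"

definition dkraus where
  "dkraus U \<pi> \<phi>E w x = vector_derivative (\<lambda>t. kraus U \<pi> \<phi>E w t) (at x)"

definition outcome_prob where
  "outcome_prob U \<pi> \<phi>E \<psi> w t = (norm (kraus U \<pi> \<phi>E w t *v \<psi>))^2"

text \<open>Normalized vector representative of sigma_{x|w} = |psi~><psi~| / p(w|x).\<close>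
definition cond_state where
  "cond_state U \<pi> \<phi>E \<psi> w t =
     complex_of_real (1 / sqrt (outcome_prob U \<pi> \<phi>E \<psi> w t)) *s (kraus U \<pi> \<phi>E w t *v \<psi>)"

definition Eop where "Eop U \<pi> \<phi>E w x = cadj (kraus U \<pi> \<phi>E w x) ** kraus U \<pi> \<phi>E w x"
definition Fop where "Fop U \<pi> \<phi>E w x = (\<chi> i j. \<i> * (cadj (dkraus U \<pi> \<phi>E w x) ** kraus U \<pi> \<phi>E w x) $ i $ j)"
definition Gop where "Gop U \<pi> \<phi>E w x = cadj (dkraus U \<pi> \<phi>E w x) ** dkraus U \<pi> \<phi>E w x"

definition expect :: "complex^'s \<Rightarrow> complex^'s^'s \<Rightarrow> complex" where
  "expect \<psi> A = cinner \<psi> (A *v \<psi>)"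

end

theory Submission
  imports Defs
begin

text \<open>Let \<open>\<Psi> = U_x (\<psi> \<otimes> \<phi>)\<close> and \<open>\<Psi>' = \<partial>_x \<Psi>\<close>. Contracting the environment with
  \<open>\<langle>\<pi>_\<omega>|\<close> sends \<open>\<Psi>\<close> and \<open>\<Psi>'\<close> to \<open>M_\<omega> \<psi>\<close> and \<open>\<partial>M_\<omega> \<psi>\<close>, so by Parseval for the basis \<open>\<pi>\<close>
  we get \<open>\<langle>G_\<Omega>\<rangle> = \<parallel>\<Psi>'\<parallel>\<^sup>2\<close> and \<open>\<langle>F_\<Omega>\<rangle> = i\<langle>\<Psi>'|\<Psi>\<rangle> = Im \<langle>\<Psi>|\<Psi>'\<rangle>\<close>, which is real because
  unitarity keeps \<open>\<parallel>\<Psi>\<parallel> = 1\<close> and hence \<open>Re \<langle>\<Psi>|\<Psi>'\<rangle> = 0\<close>; thus \<open>I\<^sup>Q = 4(\<langle>G_\<Omega>\<rangle> - \<langle>F_\<Omega>\<rangle>\<^sup>2)\<close>.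
  For an outcome with \<open>p = p(\<omega>|x) > 0\<close>, differentiating the normalisation \<open>M_\<omega>\<psi> / \<surd>p\<close> gives
  \<open>p I(\<sigma>_\<omega>) = 4(\<parallel>\<partial>M_\<omega>\<psi>\<parallel>\<^sup>2 - |\<langle>M_\<omega>\<psi>|\<partial>M_\<omega>\<psi>\<rangle>|\<^sup>2 / p)\<close>, and the hypothesis
  \<open>\<langle>F_\<omega>\<rangle> = \<langle>F_\<Omega>\<rangle> p\<close> turns the second term into \<open>\<langle>F_\<Omega>\<rangle>\<langle>F_\<omega>\<rangle>\<close>. Summing over \<open>\<checkmark>\<close>
  gives the first identity; the formula for \<open>\<kappa>\<close> is field arithmetic using
  \<open>X_\<Omega> = X_\<checkmark> + X_\<times>\<close>.\<close>

lemma Re_cinner: "Re (cinner u v) = inner u v"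
  unfolding cinner_def inner_vec_def inner_complex_def by simp

lemma cinner_commute: "cinner v u = cnj (cinner u v)"
  unfolding cinner_def by (simp add: mult.commute)

lemma cinner_self_eq_norm: "cinner v v = complex_of_real (norm v ^ 2)"
proof -
  have "Im (cinner v v) = 0" unfolding cinner_def by (simp add: algebra_simps)
  then show ?thesis by (simp add: complex_eq_iff Re_cinner power2_norm_eq_inner)
qed

lemma cinner_add_right: "cinner u (v + w) = cinner u v + cinner u w"
  unfolding cinner_def by (simp add: algebra_simps sum.distrib)

lemma vector_scaleR_component_complex: "(r *\<^sub>R (v::complex^'n)) $ i = of_real r * v $ i"
  unfolding vector_scaleR_component by (rule scaleR_conv_of_real)

lemma cinner_diff_right: "cinner u (v - w) = cinner u v - cinner u w"
  unfolding cinner_def by (simp add: algebra_simps sum_subtractf)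

lemma cinner_scaleR_right: "cinner u (r *\<^sub>R v) = of_real r * cinner u v"
  unfolding cinner_def by (simp add: vector_scaleR_component_complex sum_distrib_left algebra_simps) (simp add: scaleR_conv_of_real)

lemma cinner_scaleR_left: "cinner (r *\<^sub>R v) u = of_real r * cinner v u"
  unfolding cinner_def by (simp add: vector_scaleR_component_complex sum_distrib_left algebra_simps) (simp add: scaleR_conv_of_real)

lemma cinner_sum_right: "cinner u (\<Sum>w\<in>S. f w) = (\<Sum>w\<in>S. cinner u (f w))"
  unfolding cinner_def by (simp add: sum_distrib_left) (rule sum.swap)

lemma cinner_scale_right: "cinner u (c *s v) = c * cinner u v"
  unfolding cinner_def by (simp add: sum_distrib_left algebra_simps)

lemma cinner_cadj: "cinner u (cadj A *v v) = cinner (A *v u) v"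
  unfolding cinner_def cadj_def matrix_vector_mult_def
  by (simp add: sum_distrib_left sum_distrib_right algebra_simps) (rule sum.swap)

lemma scale_of_real_eq_scaleR: "complex_of_real c *s (v::complex^'n) = c *\<^sub>R v"
  unfolding vec_eq_iff vector_scaleR_component_complex by simp

lemma has_real_derivative_inverse_norm:
  fixes a :: "real \<Rightarrow> 'a::real_inner"
  assumes da: "(a has_vector_derivative b) (at x)" and ax: "a x \<noteq> 0"
  shows "((\<lambda>t. 1 / norm (a t)) has_real_derivative - inner (a x) b / norm (a x) ^ 3) (at x)"
proof -
  have "((\<lambda>t. norm (a t)) has_real_derivative inner (a x) b / norm (a x)) (at x)"
    using has_derivative_compose[OF da[unfolded has_vector_derivative_def] has_derivative_norm[OF ax]]
    unfolding has_real_derivative_iff_has_vector_derivative has_vector_derivative_def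
    by (simp add: sgn_div_norm inner_commute divide_inverse mult_ac)
  from DERIV_inverse_fun[OF this] ax show ?thesis
    by (simp add: divide_inverse power3_eq_cube power2_eq_square mult_ac)
qed

lemma pure_qfi_normalized:
  fixes a :: "real \<Rightarrow> complex^'n"
  assumes da: "(a has_vector_derivative b) (at x)" and ax: "a x \<noteq> 0"
  shows "norm (a x)^2 * pure_qfi (\<lambda>t. (1 / norm (a t)) *\<^sub>R a t) x
         = 4 * (norm b ^ 2 - cmod (cinner (a x) b) ^ 2 / norm (a x) ^ 2)"
proof -
  define n where "n = norm (a x)"
  define r where "r = inner (a x) b"
  define z where "z = cinner (a x) b"
  have n: "n > 0" using ax n_def by simp
  have rz: "Re z = r" unfolding z_def r_def Re_cinner ..
  define d where "d = (1 / n) *\<^sub>R b - (r / n ^ 3) *\<^sub>R a x"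
  have "((\<lambda>t. (1 / norm (a t)) *\<^sub>R a t) has_vector_derivative d) (at x)"
    using has_vector_derivative_scaleR[OF has_real_derivative_inverse_norm[OF da ax] da]
    unfolding d_def n_def r_def by (simp add: algebra_simps)
  then have vd: "vector_derivative (\<lambda>t. (1 / norm (a t)) *\<^sub>R a t) (at x) = d"
    by (rule vector_derivative_at)
  have nsq: "inner (a x) (a x) = n ^ 2" unfolding n_def by (simp add: power2_norm_eq_inner)
  have "inner d d = (1 / n) ^ 2 * inner b b - 2 * (1 / n) * (r / n ^ 3) * r + (r / n ^ 3) ^ 2 * n ^ 2"
    unfolding d_def nsq[symmetric] r_def
    by (simp add: inner_commute algebra_simps power2_eq_square)
  then have nd: "norm d ^ 2 = norm b ^ 2 / n ^ 2 - r ^ 2 / n ^ 4"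
    using n by (simp add: power2_norm_eq_inner[symmetric] field_simps eval_nat_numeral)
  have "cinner ((1 / n) *\<^sub>R a x) d
      = of_real (1 / n) * (of_real (1 / n) * z - of_real (r / n ^ 3) * of_real (n ^ 2))"
    unfolding d_def cinner_diff_right cinner_scaleR_left cinner_scaleR_right cinner_self_eq_norm
      z_def n_def by (simp add: algebra_simps)
  also have "\<dots> = (z - of_real r) / of_real (n ^ 2)"
    using n by (simp add: field_simps power2_eq_square power3_eq_cube)
  finally have "cmod (cinner ((1 / n) *\<^sub>R a x) d) ^ 2 = Im z ^ 2 / n ^ 4"
    using n rz by (simp add: norm_divide cmod_def power_divide)
  then have "pure_qfi (\<lambda>t. (1 / norm (a t)) *\<^sub>R a t) x = 4 * (norm b ^ 2 / n ^ 2 - cmod z ^ 2 / n ^ 4)"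
    unfolding pure_qfi_def Let_def vd nd n_def[symmetric] using rz by (simp add: cmod_def add_divide_distrib)
  then show ?thesis
    unfolding n_def[symmetric] z_def[symmetric] using n by (simp add: field_simps eval_nat_numeral)
qed

lemma sum_UNIV_prod:
  "(\<Sum>p\<in>(UNIV::('a::finite \<times> 'b::finite) set). f p) = (\<Sum>a\<in>UNIV. \<Sum>b\<in>UNIV. f (a, b))"
  by (simp add: UNIV_Times_UNIV[symmetric] sum.cartesian_product del: UNIV_Times_UNIV)

lemma orthonormal_basis_parseval:
  fixes \<pi> :: "'w::finite \<Rightarrow> complex^'e"
  assumes "orthonormal_basis \<pi>"
  shows "(\<Sum>w\<in>UNIV. cnj (cinner (\<pi> w) u) * cinner (\<pi> w) v) = cinner u v"
proof -
  from assms obtain k where v: "v = (\<Sum>w\<in>UNIV. k w *s \<pi> w)"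
    unfolding orthonormal_basis_def by blast
  have on: "\<And>a c. cinner (\<pi> a) (\<pi> c) = (if a = c then 1 else 0)"
    using assms unfolding orthonormal_basis_def by blast
  have coeff: "cinner (\<pi> w) v = k w" for w
    unfolding v cinner_sum_right cinner_scale_right on by (simp add: if_distrib cong: if_cong)
  show ?thesis unfolding coeff
    by (simp add: v cinner_sum_right cinner_scale_right cinner_commute[of u] mult.commute)
qed

definition partial_inner :: "('w \<Rightarrow> complex^'e) \<Rightarrow> 'w \<Rightarrow> complex^('s \<times> 'e) \<Rightarrow> complex^'s" where
  "partial_inner \<pi> w \<Phi> = (\<chi> s. cinner (\<pi> w) (\<chi> e. \<Phi> $ (s, e)))"

lemma cinner_eq_sum_partial_inner:
  fixes \<pi> :: "'w::finite \<Rightarrow> complex^'e::finite"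
  assumes "orthonormal_basis \<pi>"
  shows "cinner \<Phi> \<Theta> = (\<Sum>w\<in>UNIV. cinner (partial_inner \<pi> w \<Phi>) (partial_inner \<pi> w \<Theta>))"
proof -
  have "cinner \<Phi> \<Theta> = (\<Sum>s\<in>UNIV. cinner (\<chi> e. \<Phi> $ (s, e)) (\<chi> e. \<Theta> $ (s, e)))"
    unfolding cinner_def by (subst sum_UNIV_prod) simp
  also have "\<dots> = (\<Sum>s\<in>UNIV. \<Sum>w\<in>UNIV. cnj (partial_inner \<pi> w \<Phi> $ s) * partial_inner \<pi> w \<Theta> $ s)"
    by (simp add: partial_inner_def orthonormal_basis_parseval[OF assms])
  also have "\<dots> = (\<Sum>w\<in>UNIV. cinner (partial_inner \<pi> w \<Phi>) (partial_inner \<pi> w \<Theta>))"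
    unfolding cinner_def by (rule sum.swap)
  finally show ?thesis .
qed

text \<open>\<open>M_w\<close> as a linear function of the joint unitary, so that \<open>\<partial>M_w = M_w(U')\<close>.\<close>
definition env_kraus :: "('w \<Rightarrow> complex^'e) \<Rightarrow> complex^'e \<Rightarrow> 'w \<Rightarrow> complex^('s \<times> 'e)^('s \<times> 'e)
    \<Rightarrow> complex^'s^'s" where
  "env_kraus \<pi> \<phi>E w V = (\<chi> s s'. \<Sum>e\<in>UNIV. \<Sum>e'\<in>UNIV. cnj (\<pi> w $ e) * V $ (s, e) $ (s', e') * \<phi>E $ e')"

lemma kraus_eq_env_kraus: "kraus U \<pi> \<phi>E w t = env_kraus \<pi> \<phi>E w (U t)"
  unfolding kraus_def env_kraus_def ..

lemma env_kraus_mult_vec: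
  "env_kraus \<pi> \<phi>E w V *v \<psi> = partial_inner \<pi> w (V *v tensor_vec \<psi> \<phi>E)"
proof -
  have "(env_kraus \<pi> \<phi>E w V *v \<psi>) $ s = partial_inner \<pi> w (V *v tensor_vec \<psi> \<phi>E) $ s" for s
  proof -
    have "(env_kraus \<pi> \<phi>E w V *v \<psi>) $ s
        = (\<Sum>s'\<in>UNIV. \<Sum>e\<in>UNIV. \<Sum>e'\<in>UNIV. cnj (\<pi> w $ e) * V $ (s, e) $ (s', e') * \<phi>E $ e' * \<psi> $ s')"
      unfolding env_kraus_def matrix_vector_mult_def by (simp add: sum_distrib_right)
    also have "\<dots> = (\<Sum>e\<in>UNIV. \<Sum>s'\<in>UNIV. \<Sum>e'\<in>UNIV. cnj (\<pi> w $ e) * V $ (s, e) $ (s', e') * \<phi>E $ e' * \<psi> $ s')"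
      by (rule sum.swap)
    also have "\<dots> = partial_inner \<pi> w (V *v tensor_vec \<psi> \<phi>E) $ s"
      unfolding partial_inner_def cinner_def matrix_vector_mult_def tensor_vec_def
      by (simp add: sum_UNIV_prod sum_distrib_left algebra_simps)
    finally show ?thesis .
  qed
  then show ?thesis by (simp add: vec_eq_iff)
qed

lemma bounded_linear_env_kraus:
  "bounded_linear (env_kraus \<pi> \<phi>E w :: complex^('s::finite \<times> 'e::finite)^('s \<times> 'e) \<Rightarrow> _)"
  unfolding linear_conv_bounded_linear[symmetric]
proof (rule linearI)
  show "env_kraus \<pi> \<phi>E w (A + B) = env_kraus \<pi> \<phi>E w A + env_kraus \<pi> \<phi>E w B"
    for A B :: "complex^('s \<times> 'e)^('s \<times> 'e)"
    unfolding vec_eq_iff env_kraus_def by (simp add: distrib_left distrib_right sum.distrib)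
  show "env_kraus \<pi> \<phi>E w (r *\<^sub>R A) = r *\<^sub>R env_kraus \<pi> \<phi>E w A"
    for r and A :: "complex^('s \<times> 'e)^('s \<times> 'e)"
    unfolding vec_eq_iff env_kraus_def by (simp add: scaleR_sum_right)
qed

lemma bounded_linear_matrix_vector_mult_left:
  "bounded_linear (\<lambda>A::complex^'n::finite^'m::finite. A *v v)"
  unfolding linear_conv_bounded_linear[symmetric]
proof (rule linearI)
  show "(A + B) *v v = A *v v + B *v v" for A B :: "complex^'n^'m"
    by (simp add: matrix_vector_mult_add_rdistrib)
  show "(r *\<^sub>R A) *v v = r *\<^sub>R (A *v v)" for r and A :: "complex^'n^'m"
    unfolding vec_eq_iff matrix_vector_mult_def
    by (simp add: scaleR_sum_right)
qed

lemma unitary_mat_norm_preserving: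
  assumes "unitary_mat V" shows "norm (V *v v) = norm v"
proof -
  have "cinner (V *v v) (V *v v) = cinner v v"
    using assms unfolding unitary_mat_def
    by (metis cinner_cadj matrix_vector_mul_assoc matrix_vector_mul_lid)
  then have "norm (V *v v) ^ 2 = norm v ^ 2" unfolding cinner_self_eq_norm of_real_eq_iff .
  then show ?thesis by simp
qed

lemma norm_tensor_vec: "norm (tensor_vec \<psi> \<phi>) = norm \<psi> * norm \<phi>"
proof -
  have "cinner (tensor_vec \<psi> \<phi>) (tensor_vec \<psi> \<phi>)
      = (\<Sum>s\<in>UNIV. \<Sum>e\<in>UNIV. (cnj (\<psi> $ s) * \<psi> $ s) * (cnj (\<phi> $ e) * \<phi> $ e))"
    unfolding cinner_def tensor_vec_def by (simp add: sum_UNIV_prod mult_ac)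
  also have "\<dots> = cinner \<psi> \<psi> * cinner \<phi> \<phi>"
    unfolding cinner_def by (simp add: sum_product)
  finally have "norm (tensor_vec \<psi> \<phi>) ^ 2 = (norm \<psi> * norm \<phi>) ^ 2"
    unfolding cinner_self_eq_norm of_real_mult[symmetric] of_real_eq_iff power_mult_distrib .
  then show ?thesis by simp
qed

lemma Re_cinner_derivative_of_unit:
  fixes \<Psi> :: "real \<Rightarrow> complex^'n"
  assumes d: "(\<Psi> has_vector_derivative d') (at x)" and unit: "\<And>t. norm (\<Psi> t) = 1"
  shows "Re (cinner (\<Psi> x) d') = 0"
proof -
  have "((\<lambda>t. inner (\<Psi> t) (\<Psi> t)) has_vector_derivative (inner (\<Psi> x) d' + inner d' (\<Psi> x))) (at x)"
    using bounded_bilinear.has_vector_derivative[OF bounded_bilinear_inner d d] .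
  moreover have "(\<lambda>t. inner (\<Psi> t) (\<Psi> t)) = (\<lambda>t. 1)"
    using unit by (simp add: power2_norm_eq_inner[symmetric])
  ultimately have "inner (\<Psi> x) d' + inner d' (\<Psi> x) = 0"
    using vector_derivative_at by fastforce
  then show ?thesis by (simp add: Re_cinner inner_commute)
qed

lemma expect_sum: "finite S \<Longrightarrow> expect \<psi> (\<Sum>w\<in>S. A w) = (\<Sum>w\<in>S. expect \<psi> (A w))"
  unfolding expect_def
  by (induction S rule: finite_induct)
    (simp_all add: matrix_vector_mult_add_rdistrib cinner_add_right, simp add: cinner_def matrix_vector_mult_def)

lemma expect_cadj_mult: "expect \<psi> (cadj A ** B) = cinner (A *v \<psi>) (B *v \<psi>)"
  unfolding expect_def by (simp add: matrix_vector_mul_assoc[symmetric] cinner_cadj)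

lemma expect_sum_Compl_split:
  "expect \<psi> (\<Sum>v\<in>UNIV. A v) = expect \<psi> (\<Sum>v\<in>C. A v) + expect \<psi> (\<Sum>v\<in>-C. A (v::'w::finite))"
  unfolding expect_sum[OF finite]
  by (metis Compl_eq_Diff_UNIV add.commute finite subset_UNIV sum.subset_diff)

lemma expect_scale: "expect \<psi> (\<chi> i j. c * B $ i $ j) = c * expect \<psi> B"
  unfolding expect_def cinner_def matrix_vector_mult_def by (simp add: sum_distrib_left algebra_simps)

lemma expect_Eop: "expect \<psi> (Eop U \<pi> \<phi>E w x) = of_real (outcome_prob U \<pi> \<phi>E \<psi> w x)"
  unfolding Eop_def outcome_prob_def expect_cadj_mult cinner_self_eq_norm ..

lemma expect_Fop:
  "expect \<psi> (Fop U \<pi> \<phi>E w x) = \<i> * cinner (dkraus U \<pi> \<phi>E w x *v \<psi>) (kraus U \<pi> \<phi>E w x *v \<psi>)"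
  unfolding Fop_def expect_scale expect_cadj_mult ..

lemma expect_Gop: "expect \<psi> (Gop U \<pi> \<phi>E w x) = of_real (norm (dkraus U \<pi> \<phi>E w x *v \<psi>) ^ 2)"
  unfolding Gop_def expect_cadj_mult cinner_self_eq_norm ..

lemma cond_state_eq_normalized:
  "cond_state U \<pi> \<phi>E \<psi> w = (\<lambda>t. (1 / norm (kraus U \<pi> \<phi>E w t *v \<psi>)) *\<^sub>R (kraus U \<pi> \<phi>E w t *v \<psi>))"
  unfolding cond_state_def outcome_prob_def scale_of_real_eq_scaleR by simp


lemma relative_loss_eq:
  fixes S Q G GC GX F FC FX :: "'a::field"
  assumes S: "S = 4 * (GC - F * FC)" and Q: "Q = 4 * (G - F ^ 2)"
    and G: "G = GC + GX" and F: "F = FC + FX" and "Q \<noteq> 0"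
  shows "1 - S / Q = (GX - F * FX) / (G - F ^ 2)"
proof -
  define D where "D = G - F ^ 2"
  have "4 * D \<noteq> 0" using Q \<open>Q \<noteq> 0\<close> unfolding D_def by simp
  then have "(4::'a) \<noteq> 0" and "D \<noteq> 0" by auto
  then have "1 - S / Q = (D - (GC - F * FC)) / D"
    unfolding S Q D_def[symmetric] by (simp add: diff_divide_distrib)
  also have "\<dots> = (GX - F * FX) / D"
    unfolding D_def G F by (simp add: algebra_simps power2_eq_square)
  finally show ?thesis unfolding D_def .
qed

locale pure_dilation =
  fixes U :: "real \<Rightarrow> complex^('s::finite \<times> 'e::finite)^('s \<times> 'e)"
    and \<pi> :: "'w::finite \<Rightarrow> complex^'e"
    and \<psi> :: "complex^'s" and \<phi>E :: "complex^'e" and x :: real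
  assumes unit_psi: "norm \<psi> = 1" and unit_phi: "norm \<phi>E = 1"
    and unitary: "\<And>t. unitary_mat (U t)"
    and U_differentiable: "U differentiable (at x)"
    and onb: "orthonormal_basis \<pi>"
begin

definition joint_state :: "real \<Rightarrow> complex^('s \<times> 'e)" where
  "joint_state t = U t *v tensor_vec \<psi> \<phi>E"

definition joint_velocity :: "complex^('s \<times> 'e)" where
  "joint_velocity = vector_derivative U (at x) *v tensor_vec \<psi> \<phi>E"

lemma has_vector_derivative_U: "(U has_vector_derivative vector_derivative U (at x)) (at x)"
  using U_differentiable by (rule vector_derivative_works[THEN iffD1])

lemma has_vector_derivative_joint_state: "(joint_state has_vector_derivative joint_velocity) (at x)"
  unfolding joint_state_def joint_velocity_def
  using bounded_linear.has_vector_derivative[OF bounded_linear_matrix_vector_mult_left has_vector_derivative_U] .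

lemma norm_joint_state: "norm (joint_state t) = 1"
  unfolding joint_state_def
  by (simp add: unitary_mat_norm_preserving[OF unitary] norm_tensor_vec unit_psi unit_phi)

lemma Re_cinner_joint_velocity: "Re (cinner (joint_state x) joint_velocity) = 0"
  using has_vector_derivative_joint_state norm_joint_state by (rule Re_cinner_derivative_of_unit)

lemma has_vector_derivative_kraus_vec:
  "((\<lambda>t. kraus U \<pi> \<phi>E w t *v \<psi>) has_vector_derivative (dkraus U \<pi> \<phi>E w x *v \<psi>)) (at x)"
proof -
  have "((\<lambda>t. kraus U \<pi> \<phi>E w t) has_vector_derivative env_kraus \<pi> \<phi>E w (vector_derivative U (at x))) (at x)"
    unfolding kraus_eq_env_kraus
    using bounded_linear.has_vector_derivative[OF bounded_linear_env_kraus has_vector_derivative_U] .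
  moreover from this have "dkraus U \<pi> \<phi>E w x = env_kraus \<pi> \<phi>E w (vector_derivative U (at x))"
    unfolding dkraus_def by (rule vector_derivative_at)
  ultimately show ?thesis
    using bounded_linear.has_vector_derivative[OF bounded_linear_matrix_vector_mult_left] by metis
qed

lemma kraus_vec_eq_partial_inner: "kraus U \<pi> \<phi>E w x *v \<psi> = partial_inner \<pi> w (joint_state x)"
  unfolding kraus_eq_env_kraus env_kraus_mult_vec joint_state_def ..

lemma dkraus_vec_eq_partial_inner: "dkraus U \<pi> \<phi>E w x *v \<psi> = partial_inner \<pi> w joint_velocity"
proof -
  have "dkraus U \<pi> \<phi>E w x = env_kraus \<pi> \<phi>E w (vector_derivative U (at x))"
    unfolding dkraus_def kraus_eq_env_kraus
    using bounded_linear.has_vector_derivative[OF bounded_linear_env_kraus has_vector_derivative_U]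
    by (rule vector_derivative_at)
  then show ?thesis by (simp add: env_kraus_mult_vec joint_velocity_def)
qed

lemma expect_Fop_total:
  "expect \<psi> (\<Sum>v\<in>UNIV. Fop U \<pi> \<phi>E v x) = of_real (Im (cinner (joint_state x) joint_velocity))"
proof -
  have "expect \<psi> (\<Sum>v\<in>UNIV. Fop U \<pi> \<phi>E v x)
      = \<i> * (\<Sum>v\<in>UNIV. cinner (partial_inner \<pi> v joint_velocity) (partial_inner \<pi> v (joint_state x)))"
    by (simp add: expect_sum expect_Fop sum_distrib_left kraus_vec_eq_partial_inner dkraus_vec_eq_partial_inner)
  also have "\<dots> = \<i> * cnj (cinner (joint_state x) joint_velocity)"
    unfolding cinner_eq_sum_partial_inner[OF onb, symmetric] cinner_commute[of joint_velocity] ..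
  finally show ?thesis using Re_cinner_joint_velocity by (simp add: complex_eq_iff)
qed

lemma expect_Gop_total: "expect \<psi> (\<Sum>v\<in>UNIV. Gop U \<pi> \<phi>E v x) = of_real (norm joint_velocity ^ 2)"
proof -
  have "expect \<psi> (\<Sum>v\<in>UNIV. Gop U \<pi> \<phi>E v x)
      = (\<Sum>v\<in>UNIV. cinner (partial_inner \<pi> v joint_velocity) (partial_inner \<pi> v joint_velocity))"
    by (simp add: expect_sum expect_Gop cinner_self_eq_norm dkraus_vec_eq_partial_inner)
  also have "\<dots> = cinner joint_velocity joint_velocity"
    by (rule cinner_eq_sum_partial_inner[OF onb, symmetric])
  finally show ?thesis unfolding cinner_self_eq_norm .
qed

lemma pure_qfi_joint_state:
  "of_real (pure_qfi (\<lambda>t. U t *v tensor_vec \<psi> \<phi>E) x)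
     = 4 * (expect \<psi> (\<Sum>v\<in>UNIV. Gop U \<pi> \<phi>E v x) - (expect \<psi> (\<Sum>v\<in>UNIV. Fop U \<pi> \<phi>E v x)) ^ 2)"
proof -
  have "pure_qfi joint_state x = 4 * (norm joint_velocity ^ 2 - Im (cinner (joint_state x) joint_velocity) ^ 2)"
    unfolding pure_qfi_def Let_def vector_derivative_at[OF has_vector_derivative_joint_state]
    using Re_cinner_joint_velocity by (simp add: cmod_def)
  then show ?thesis
    unfolding expect_Gop_total expect_Fop_total joint_state_def[abs_def] by simp
qed

lemma weighted_cond_qfi:
  assumes p: "outcome_prob U \<pi> \<phi>E \<psi> w x > 0"
    and F: "expect \<psi> (Fop U \<pi> \<phi>E w x)
              = expect \<psi> (\<Sum>v\<in>UNIV. Fop U \<pi> \<phi>E v x) * expect \<psi> (Eop U \<pi> \<phi>E w x)"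
  shows "of_real (outcome_prob U \<pi> \<phi>E \<psi> w x * pure_qfi (cond_state U \<pi> \<phi>E \<psi> w) x)
           = 4 * (expect \<psi> (Gop U \<pi> \<phi>E w x)
                  - expect \<psi> (\<Sum>v\<in>UNIV. Fop U \<pi> \<phi>E v x) * expect \<psi> (Fop U \<pi> \<phi>E w x))"
proof -
  define a where "a t = kraus U \<pi> \<phi>E w t *v \<psi>" for t
  define b where "b = dkraus U \<pi> \<phi>E w x *v \<psi>"
  define f where "f = Im (cinner (joint_state x) joint_velocity)"
  define q where "q = outcome_prob U \<pi> \<phi>E \<psi> w x"
  have q: "q = norm (a x) ^ 2" unfolding q_def a_def outcome_prob_def ..
  have "a x \<noteq> 0" using p q unfolding q_def by auto
  moreover have "(a has_vector_derivative b) (at x)"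
    unfolding a_def b_def by (rule has_vector_derivative_kraus_vec)
  ultimately have qfi: "q * pure_qfi (cond_state U \<pi> \<phi>E \<psi> w) x
      = 4 * (norm b ^ 2 - cmod (cinner (a x) b) ^ 2 / q)"
    unfolding q cond_state_eq_normalized using pure_qfi_normalized unfolding a_def by blast
  have Fw: "\<i> * cinner b (a x) = of_real (f * q)"
    using F unfolding expect_Fop expect_Fop_total expect_Eop a_def b_def f_def q_def by simp
  have "cmod (cinner (a x) b) = cmod (\<i> * cinner b (a x))"
    by (simp add: cinner_commute[of "a x"] norm_mult)
  also have "\<dots> = \<bar>f * q\<bar>"
    unfolding Fw norm_of_real ..
  finally have "q * pure_qfi (cond_state U \<pi> \<phi>E \<psi> w) x = 4 * (norm b ^ 2 - f * (f * q))"
    unfolding qfi using p unfolding q_def[symmetric] by (simp add: power2_eq_square)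
  then show ?thesis
    unfolding expect_Gop expect_Fop expect_Fop_total q_def[symmetric] b_def[symmetric]
      a_def[symmetric, of x] f_def[symmetric] Fw by simp
qed

end

theorem mainTheorem4:
  fixes U :: "real \<Rightarrow> complex^('s::finite \<times> 'e::finite)^('s \<times> 'e)"
    and \<pi> :: "'w::finite \<Rightarrow> complex^'e"
    and \<psi> :: "complex^'s" and \<phi>E :: "complex^'e"
    and Ck :: "'w set" and x :: real
  assumes unit_psi: "norm \<psi> = 1" and unit_phi: "norm \<phi>E = 1"
    and unitary: "\<forall>t. unitary_mat (U t)"
    and C1_diff: "\<forall>t. U differentiable (at t)"
    and C1_cont: "continuous_on UNIV (\<lambda>t. vector_derivative U (at t))"
    and onb: "orthonormal_basis \<pi>"
    and pos: "\<forall>w\<in>Ck. outcome_prob U \<pi> \<phi>E \<psi> w x > 0"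
    and Fcond: "\<forall>w\<in>Ck. expect \<psi> (Fop U \<pi> \<phi>E w x)
                   = expect \<psi> (\<Sum>v\<in>UNIV. Fop U \<pi> \<phi>E v x) * expect \<psi> (Eop U \<pi> \<phi>E w x)"
  shows "complex_of_real (\<Sum>w\<in>Ck. outcome_prob U \<pi> \<phi>E \<psi> w x * pure_qfi (cond_state U \<pi> \<phi>E \<psi> w) x)
           = 4 * (expect \<psi> (\<Sum>w\<in>Ck. Gop U \<pi> \<phi>E w x)
                  - expect \<psi> (\<Sum>v\<in>UNIV. Fop U \<pi> \<phi>E v x) * expect \<psi> (\<Sum>w\<in>Ck. Fop U \<pi> \<phi>E w x))
       \<and> (pure_qfi (\<lambda>t. U t *v tensor_vec \<psi> \<phi>E) x > 0 \<longrightarrow>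
           complex_of_real (1 - (\<Sum>w\<in>Ck. outcome_prob U \<pi> \<phi>E \<psi> w x * pure_qfi (cond_state U \<pi> \<phi>E \<psi> w) x)
                                 / pure_qfi (\<lambda>t. U t *v tensor_vec \<psi> \<phi>E) x)
           = (expect \<psi> (\<Sum>w\<in>-Ck. Gop U \<pi> \<phi>E w x)
                - expect \<psi> (\<Sum>v\<in>UNIV. Fop U \<pi> \<phi>E v x) * expect \<psi> (\<Sum>w\<in>-Ck. Fop U \<pi> \<phi>E w x))
             / (expect \<psi> (\<Sum>v\<in>UNIV. Gop U \<pi> \<phi>E v x) - (expect \<psi> (\<Sum>v\<in>UNIV. Fop U \<pi> \<phi>E v x))^2))"
proof -
  interpret pure_dilation U \<pi> \<psi> \<phi>E x
    using assms by unfold_locales auto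
  have sum_eq: "complex_of_real (\<Sum>w\<in>Ck. outcome_prob U \<pi> \<phi>E \<psi> w x * pure_qfi (cond_state U \<pi> \<phi>E \<psi> w) x)
           = 4 * (expect \<psi> (\<Sum>w\<in>Ck. Gop U \<pi> \<phi>E w x)
                  - expect \<psi> (\<Sum>v\<in>UNIV. Fop U \<pi> \<phi>E v x) * expect \<psi> (\<Sum>w\<in>Ck. Fop U \<pi> \<phi>E w x))"
    using pos Fcond
    by (simp add: weighted_cond_qfi expect_sum sum_distrib_left sum_subtractf del: of_real_mult)
  show ?thesis
    using sum_eq relative_loss_eq[OF sum_eq pure_qfi_joint_state expect_sum_Compl_split expect_sum_Compl_split]
    by simp
qed

end
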